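(* For all $1\le i<j\le\ell$, $X_iX_j=q^{-1}X_jX_i$.
   Context: $0<q<1$, $\ell\ge1$. In $U_q(\mathfrak{su}(\ell+1))$ (generators $K_i^{\pm1},E_i,F_i=E_i^*$, $1\le i\le\ell$, standard Drinfeld–Jimbo relations $K_iE_iK_i^{-1}=qE_i$, $K_iE_jK_i^{-1}=q^{-1/2}E_j$ for $|i-j|=1$, $=E_j$ for $|i-j|>1$, $[E_i,F_j]=\delta_{ij}\frac{K_i^2-K_i^{-2}}{q-q^{-1}}$, quantum Serre relations), enlarged by $\hat K=(K_1K_2^2\cdots K_\ell^\ell)^{2/(\ell+1)}$, set $[a,b]_q=ab-q^{-1}ba$, $M_{ii}=E_i$, $M_{jk}=[E_j,M_{j+1,k}]_q$ ($j<k$), $N_{i\ell}=(K_iK_{i+1}\cdots K_\ell)\hat K^{-1}$ and $X_i:=N_{i\ell}M_{i\ell}^*$. *)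

theory Defs
  imports Complex_Main
begin

text \<open>Abstract setting: a real unital algebra with an involution s (the star).
  Since q is real, conjugate-linearity of the star is just real-linearity.\<close>

definition star_alg :: "('a::real_algebra_1 \<Rightarrow> 'a) \<Rightarrow> bool" where
  "star_alg s \<longleftrightarrow>
     (\<forall>x y. s (x + y) = s x + s y) \<and>
     (\<forall>x y. s (x * y) = s y * s x) \<and>
     (\<forall>c x. s (scaleR c x) = scaleR c (s x)) \<and>
     (\<forall>x. s (s x) = x) \<and> s 1 = 1"

definition qcomm :: "real \<Rightarrow> 'a::real_algebra_1 \<Rightarrow> 'a \<Rightarrow> 'a" where
  "qcomm q a b = a * b - scaleR (1 / q) (b * a)"

text \<open>Mrec q E n k = M_{k-n,k}.\<close>
primrec Mrec :: "real \<Rightarrow> (nat \<Rightarrow> 'a::real_algebra_1) \<Rightarrow> nat \<Rightarrow> nat \<Rightarrow> 'a" where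
  "Mrec q E 0 k = E k"
| "Mrec q E (Suc n) k = qcomm q (E (k - Suc n)) (Mrec q E n k)"

definition Mq :: "real \<Rightarrow> (nat \<Rightarrow> 'a::real_algebra_1) \<Rightarrow> nat \<Rightarrow> nat \<Rightarrow> 'a" where
  "Mq q E j k = Mrec q E (k - j) k"

definition Nq :: "(nat \<Rightarrow> 'a::real_algebra_1) \<Rightarrow> 'a \<Rightarrow> nat \<Rightarrow> nat \<Rightarrow> 'a" where
  "Nq K Khinv i l = foldr (*) (map K [i..<Suc l]) 1 * Khinv"

definition Xq :: "real \<Rightarrow> nat \<Rightarrow> ('a::real_algebra_1 \<Rightarrow> 'a) \<Rightarrow> (nat \<Rightarrow> 'a) \<Rightarrow> (nat \<Rightarrow> 'a) \<Rightarrow> 'a \<Rightarrow> nat \<Rightarrow> 'a" where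
  "Xq q l s K E Khinv i = Nq K Khinv i l * s (Mq q E i l)"

text \<open>Defining relations of U_q(su(l+1)) (with F_i = E_i^*, K_i self-adjoint, K_i^{-1} = Kinv i),
  enlarged by the self-adjoint invertible element Khat = (K_1 K_2^2 ... K_l^l)^{2/(l+1)}
  (inverse Khinv); the relations of Khat are those forced by this definition.\<close>
definition Uq_enlarged ::
  "real \<Rightarrow> nat \<Rightarrow> ('a::real_algebra_1 \<Rightarrow> 'a) \<Rightarrow> (nat \<Rightarrow> 'a) \<Rightarrow> (nat \<Rightarrow> 'a) \<Rightarrow> (nat \<Rightarrow> 'a)
     \<Rightarrow> 'a \<Rightarrow> 'a \<Rightarrow> bool" where
  "Uq_enlarged q l s K Kinv E Kh Khinv \<longleftrightarrow>
     star_alg s \<and>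
     (\<forall>i\<in>{1..l}. K i * Kinv i = 1 \<and> Kinv i * K i = 1 \<and> s (K i) = K i) \<and>
     (\<forall>i\<in>{1..l}. \<forall>j\<in>{1..l}. K i * K j = K j * K i) \<and>
     (\<forall>i\<in>{1..l}. \<forall>j\<in>{1..l}. K i * E j * Kinv i =
        (if i = j then scaleR q (E j)
         else if i = j + 1 \<or> j = i + 1 then scaleR (q powr (-1/2)) (E j)
         else E j)) \<and>
     (\<forall>i\<in>{1..l}. \<forall>j\<in>{1..l}. E i * s (E j) - s (E j) * E i =
        (if i = j then scaleR (1 / (q - 1 / q)) (K i ^ 2 - Kinv i ^ 2) else 0)) \<and>
     (\<forall>i\<in>{1..l}. \<forall>j\<in>{1..l}. (i = j + 1 \<or> j = i + 1) \<longrightarrow>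
        E i ^ 2 * E j - scaleR (q + 1 / q) (E i * E j * E i) + E j * E i ^ 2 = 0) \<and>
     (\<forall>i\<in>{1..l}. \<forall>j\<in>{1..l}. (i > j + 1 \<or> j > i + 1) \<longrightarrow> E i * E j = E j * E i) \<and>
     Kh * Khinv = 1 \<and> Khinv * Kh = 1 \<and> s Kh = Kh \<and>
     (\<forall>i\<in>{1..l}. Kh * K i = K i * Kh) \<and>
     (\<forall>j\<in>{1..l}. Kh * E j * Khinv = (if j = l then scaleR q (E j) else E j)) \<and>
     Kh ^ (l + 1) = (foldr (*) (map (\<lambda>i. K i ^ i) [1..<Suc l]) 1) ^ 2"

end

theory Submission
  imports Defs
begin

text \<open>Write \<open>X\<^sub>i = N\<^sub>i M\<^sub>i\<^sup>*\<close> with \<open>M\<^sub>i = M\<^sub>i\<^sub>\<ell>\<close>.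
  The \<open>N\<^sub>i\<close> are self-adjoint and commute with each other. Conjugation by \<open>N\<^sub>i\<close> rescales
  every \<open>E\<^sub>b\<close> by a power of \<open>q\<close>, hence \<open>N\<^sub>i\<close> \<open>q\<close>-commutes with every \<open>M\<^sub>k\<close>; the exponents
  telescope along \<open>k..\<ell>\<close> and give the factor \<open>q\<^sup>-\<^sup>1\<^sup>/\<^sup>2\<close> whenever \<open>k \<noteq> i\<close>.
  The \<open>M\<close>'s satisfy \<open>M\<^sub>i M\<^sub>j = q M\<^sub>j M\<^sub>i\<close> for \<open>i < j\<close>: for \<open>j = i + 1\<close> this is the
  \<open>q\<close>-Serre relation between \<open>M\<^sub>i\<^sub>+\<^sub>1\<close> and \<open>E\<^sub>i\<close>, which is inherited from the Serre
  relations of the generators along the recursion \<open>M\<^sub>k = [E\<^sub>k, M\<^sub>k\<^sub>+\<^sub>1]\<^sub>q\<close>, and the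
  general case follows because \<open>E\<^sub>i\<close> commutes with \<open>M\<^sub>j\<close> for \<open>j \<ge> i + 2\<close>. Moving the
  factors of \<open>X\<^sub>i X\<^sub>j\<close> and \<open>X\<^sub>j X\<^sub>i\<close> past each other with these rules gives
  \<open>q\<^sup>-\<^sup>1\<^sup>/\<^sup>2 N\<^sub>i N\<^sub>j M\<^sub>i\<^sup>* M\<^sub>j\<^sup>*\<close> and \<open>q\<^sup>1\<^sup>/\<^sup>2 N\<^sub>i N\<^sub>j M\<^sub>i\<^sup>* M\<^sub>j\<^sup>*\<close> respectively.\<close>

definition q_serre :: "real \<Rightarrow> 'a::real_algebra_1 \<Rightarrow> 'a \<Rightarrow> 'a" where
  "q_serre q x y = x\<^sup>2 * y - (q + 1/q) *\<^sub>R (x * y * x) + y * x\<^sup>2"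

definition skew_commute :: "real \<Rightarrow> 'a::real_algebra_1 \<Rightarrow> 'a \<Rightarrow> bool" where
  "skew_commute c x y \<longleftrightarrow> x * y = c *\<^sub>R (y * x)"

lemma skew_commute_one_iff: "skew_commute 1 x y \<longleftrightarrow> x * y = y * x"
  by (simp add: skew_commute_def)

lemma skew_commute_mult_right:
  assumes "skew_commute c x y" and "skew_commute d x z"
  shows "skew_commute (c * d) x (y * z)"
proof -
  have "x * (y * z) = c *\<^sub>R (y * (x * z))"
    using assms(1) by (simp add: skew_commute_def mult.assoc[symmetric])
  also have "\<dots> = (c * d) *\<^sub>R (y * z * x)"
    using assms(2) by (simp add: skew_commute_def mult.assoc)
  finally show ?thesis by (simp add: skew_commute_def)
qed

lemma skew_commute_mult_left:
  assumes "skew_commute c x z" and "skew_commute d y z"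
  shows "skew_commute (c * d) (x * y) z"
proof -
  have "x * y * z = d *\<^sub>R (x * z * y)"
    using assms(2) by (simp add: skew_commute_def mult.assoc)
  also have "\<dots> = (c * d) *\<^sub>R (z * (x * y))"
    using assms(1) by (simp add: skew_commute_def mult.assoc)
  finally show ?thesis by (simp add: skew_commute_def)
qed

lemma skew_commute_qcomm_right:
  assumes "skew_commute c x y" and "skew_commute d x z"
  shows "skew_commute (c * d) x (qcomm q y z)"
  using skew_commute_mult_right[OF assms] skew_commute_mult_right[OF assms(2,1)]
  by (simp add: skew_commute_def qcomm_def algebra_simps mult.commute[of d])

lemma skew_commute_qcomm_left:
  assumes "skew_commute c x z" and "skew_commute d y z"
  shows "skew_commute (c * d) (qcomm q x y) z"
  using skew_commute_mult_left[OF assms] skew_commute_mult_left[OF assms(2,1)]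
  by (simp add: skew_commute_def qcomm_def algebra_simps mult.commute[of d])

lemma skew_commute_foldr:
  assumes "\<And>a. a \<in> set xs \<Longrightarrow> skew_commute (f a) (K a) y"
  shows "skew_commute (\<Prod>a\<leftarrow>xs. f a) (foldr (*) (map K xs) 1) y"
  using assms
proof (induction xs)
  case Nil
  then show ?case by (simp add: skew_commute_def)
next
  case (Cons a xs)
  then show ?case by (simp add: skew_commute_mult_left)
qed

lemma commute_foldr:
  fixes K :: "'b \<Rightarrow> 'a::real_algebra_1"
  assumes "\<And>a. a \<in> set xs \<Longrightarrow> K a * y = y * K a"
  shows "foldr (*) (map K xs) 1 * y = y * foldr (*) (map K xs) 1"
proof -
  have "skew_commute (\<Prod>a\<leftarrow>xs. 1) (foldr (*) (map K xs) 1) y"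
    by (rule skew_commute_foldr) (simp add: assms skew_commute_one_iff)
  moreover have "(\<Prod>a\<leftarrow>xs. 1::real) = 1" by (induction xs) simp_all
  ultimately show ?thesis by (simp add: skew_commute_one_iff)
qed

lemma skew_commute_conj:
  assumes "y * x = 1" and "x * z * y = c *\<^sub>R z"
  shows "skew_commute c x z"
proof -
  have "x * z = x * z * y * x" using assms(1) by (simp add: mult.assoc)
  then show ?thesis using assms(2) by (simp add: skew_commute_def)
qed

lemma skew_commute_inverse:
  assumes "x * y = 1" and "y * x = 1" and "c \<noteq> 0" and "skew_commute c x z"
  shows "skew_commute (1 / c) y z"
proof -
  have "z * y = y * (x * z) * y" using assms(2) by (simp add: mult.assoc[symmetric])
  also have "\<dots> = c *\<^sub>R (y * z)"
    using assms(1,4) by (simp add: skew_commute_def mult.assoc)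
  finally show ?thesis using assms(3) by (simp add: skew_commute_def)
qed

lemma q_serre_iff_skew_commute_qcomm:
  assumes "q \<noteq> 0"
  shows "q_serre q y x = 0 \<longleftrightarrow> skew_commute q (qcomm q x y) y"
proof -
  have "qcomm q x y * y - q *\<^sub>R (y * qcomm q x y) = q_serre q y x"
    using assms by (simp add: qcomm_def q_serre_def algebra_simps power2_eq_square)
  then show ?thesis unfolding skew_commute_def by (metis eq_iff_diff_eq_0)
qed

lemma q_serre_qcomm:
  fixes a b P :: "'a::real_algebra_1"
  assumes "0 < q" and "a * P = P * a" and "q_serre q b a = 0" and "q_serre q P b = 0"
  shows "q_serre q (qcomm q b P) a = 0"
proof -
  define r where "r = 1 / q"
  define C S T where "C = a * P - P * a" and "S = q_serre q b a" and "T = q_serre q P b"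
  have qr: "q * r = 1" "r * q = 1" "q * (r * x) = x" "r * (q * x) = x" for x
    using \<open>0 < q\<close> by (simp_all add: r_def)
  \<comment> \<open>A certificate: the left side is a combination, with coefficients in \<open>q\<^sup>\<plusminus>\<^sup>1\<close>,
    of two-sided multiples of \<open>C\<close>, \<open>S\<close>, \<open>T\<close>; the factor \<open>q + q\<^sup>-\<^sup>1\<close> clears denominators.\<close>
  have "(q + r) *\<^sub>R q_serre q (qcomm q b P) a =
      (r*r) *\<^sub>R (C*P*b*b) + (r*r) *\<^sub>R (P*C*b*b)
    - (r*r*r*r) *\<^sub>R (P*b*C*b) - (r*r) *\<^sub>R (P*b*C*b) - (r*r) *\<^sub>R (P*b*C*b) - P*b*C*b
    + (r*r) *\<^sub>R (P*b*b*C) + P*b*b*C - r *\<^sub>R (b*C*P*b) - q *\<^sub>R (b*C*P*b)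
    + (r*r*r) *\<^sub>R (b*P*C*b) + r *\<^sub>R (b*P*C*b) - (r*r) *\<^sub>R (C*b*b*P) - C*b*b*P
    + (r*r) *\<^sub>R (b*C*b*P) + b*C*b*P + b*C*b*P + (q*q) *\<^sub>R (b*C*b*P) - b*b*C*P - b*b*P*C
    + S*P*P - (r*r) *\<^sub>R (P*S*P) - P*S*P + (r*r) *\<^sub>R (P*P*S)
    + (r*r*r) *\<^sub>R (T*a*b) + r *\<^sub>R (T*a*b) - (r*r) *\<^sub>R (a*T*b) - a*b*T
    - (r*r) *\<^sub>R (T*b*a) - b*T*a + r *\<^sub>R (b*a*T) + q *\<^sub>R (b*a*T)"
    unfolding C_def S_def T_def q_serre_def qcomm_def r_def[symmetric]
    by (simp add: algebra_simps power2_eq_square scaleR_add_left scaleR_diff_left qr)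
  moreover have "C = 0" "S = 0" "T = 0" using assms by (simp_all add: C_def S_def T_def)
  moreover have "q + r > 0" using \<open>0 < q\<close> by (simp add: r_def add_pos_pos)
  ultimately show ?thesis by simp
qed

lemma
  assumes "star_alg s"
  shows star_alg_mult: "s (x * y) = s y * s x"
    and star_alg_scaleR: "s (c *\<^sub>R x) = c *\<^sub>R s x"
    and star_alg_one: "s 1 = 1"
  using assms unfolding star_alg_def by blast+

lemma skew_commute_star:
  assumes "star_alg s" and "skew_commute c x y"
  shows "skew_commute c (s y) (s x)"
  using arg_cong[of _ _ s, OF assms(2)[unfolded skew_commute_def]] assms(1)
  by (simp add: skew_commute_def star_alg_mult star_alg_scaleR)

lemma star_alg_inverse_self_adjoint:
  assumes "star_alg s" and "x * y = 1" and "y * x = 1" and "s x = x"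
  shows "s y = y"
proof -
  have "s y * x = 1"
    using arg_cong[of _ _ s, OF assms(2)] assms(1,4) by (simp add: star_alg_mult star_alg_one)
  have "s y = s y * (x * y)" using assms(2) by simp
  also have "\<dots> = y" using \<open>s y * x = 1\<close> by (simp add: mult.assoc[symmetric])
  finally show ?thesis .
qed

lemma skew_commute_mult_star:
  assumes "star_alg s" and "q \<noteq> 0"
    and "s N = N" and "s N' = N'" and "N * N' = N' * N"
    and "skew_commute c N M'" and "skew_commute c N' M" and "skew_commute q M M'"
  shows "skew_commute (1 / q) (N * s M) (N' * s M')"
proof -
  have MN': "s M * N' = c *\<^sub>R (N' * s M)"
    using skew_commute_star[OF assms(1,7)] assms(4) by (simp add: skew_commute_def)
  have M'N: "s M' * N = c *\<^sub>R (N * s M')"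
    using skew_commute_star[OF assms(1,6)] assms(3) by (simp add: skew_commute_def)
  have MM': "s M' * s M = q *\<^sub>R (s M * s M')"
    using skew_commute_star[OF assms(1,8)] by (simp add: skew_commute_def)
  have "N * s M * (N' * s M') = N * (s M * N') * s M'" by (simp add: mult.assoc)
  also have "\<dots> = c *\<^sub>R (N * N' * (s M * s M'))" by (simp add: MN' mult.assoc)
  finally have "N * s M * (N' * s M') = c *\<^sub>R (N * N' * (s M * s M'))" .
  moreover have "N' * s M' * (N * s M) = (c * q) *\<^sub>R (N * N' * (s M * s M'))"
  proof -
    have "N' * s M' * (N * s M) = N' * (s M' * N) * s M" by (simp add: mult.assoc)
    also have "\<dots> = c *\<^sub>R (N' * N * (s M' * s M))" by (simp add: M'N mult.assoc)
    also have "\<dots> = (c * q) *\<^sub>R (N * N' * (s M * s M'))" by (simp add: MM' assms(5))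
    finally show ?thesis .
  qed
  ultimately show ?thesis using assms(2) by (simp add: skew_commute_def)
qed

lemma Mq_last: "Mq q E l l = E l"
  by (simp add: Mq_def)

lemma Mq_step:
  assumes "k < l"
  shows "Mq q E k l = qcomm q (E k) (Mq q E (Suc k) l)"
proof -
  have "l - k = Suc (l - Suc k)" and "l - Suc (l - Suc k) = k" using assms by auto
  then show ?thesis by (simp add: Mq_def)
qed

lemma skew_commute_Mq:
  assumes "k \<le> l" and "\<And>b. b \<in> {k..l} \<Longrightarrow> skew_commute (f b) x (E b)"
  shows "skew_commute (\<Prod>b\<in>{k..l}. f b) x (Mq q E k l)"
  using assms(1)
proof (induction k rule: inc_induct)
  case base
  then show ?case using assms by (simp add: Mq_last)
next
  case (step n)
  have "{n..l} = insert n {Suc n..l}" using step.hyps by auto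
  then have "(\<Prod>b\<in>{n..l}. f b) = f n * (\<Prod>b\<in>{Suc n..l}. f b)" by simp
  moreover have "skew_commute (f n) x (E n)" using assms(2) step.hyps by simp
  ultimately show ?case
    using skew_commute_qcomm_right step.IH by (simp add: Mq_step[OF step.hyps(2)])
qed

locale quantum_serre =
  fixes q :: real and l :: nat and E :: "nat \<Rightarrow> 'a::real_algebra_1"
  assumes q_pos: "0 < q"
    and serre: "\<lbrakk>i \<in> {1..l}; j \<in> {1..l}; i = j + 1 \<or> j = i + 1\<rbrakk> \<Longrightarrow> q_serre q (E i) (E j) = 0"
    and commute: "\<lbrakk>i \<in> {1..l}; j \<in> {1..l}; i > j + 1 \<or> j > i + 1\<rbrakk> \<Longrightarrow> E i * E j = E j * E i"
begin

lemma E_commute_Mq: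
  assumes "1 \<le> k" and "k + 2 \<le> m" and "m \<le> l"
  shows "E k * Mq q E m l = Mq q E m l * E k"
proof -
  have "skew_commute (\<Prod>b\<in>{m..l}. 1) (E k) (Mq q E m l)"
    by (rule skew_commute_Mq) (use assms in \<open>auto simp: skew_commute_one_iff intro: commute\<close>)
  then show ?thesis by (simp add: skew_commute_one_iff)
qed

lemma q_serre_Mq_E:
  assumes "1 \<le> k" and "k < l"
  shows "q_serre q (Mq q E (Suc k) l) (E k) = 0"
proof -
  have "k \<le> l - 1" using assms by simp
  then show ?thesis
  proof (induction k rule: inc_induct)
    case base
    show ?case using assms by (simp add: Mq_last serre)
  next
    case (step n)
    have "q_serre q (qcomm q (E (Suc n)) (Mq q E (Suc (Suc n)) l)) (E n) = 0"
    proof (rule q_serre_qcomm[OF q_pos])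
      show "E n * Mq q E (Suc (Suc n)) l = Mq q E (Suc (Suc n)) l * E n"
        using assms step.hyps by (intro E_commute_Mq) auto
      show "q_serre q (E (Suc n)) (E n) = 0"
        using assms step.hyps by (intro serre) auto
    qed (rule step.IH)
    then show ?case using step.hyps by (simp add: Mq_step)
  qed
qed

lemma Mq_skew_commute:
  assumes "1 \<le> i" and "i < j" and "j \<le> l"
  shows "skew_commute q (Mq q E i l) (Mq q E j l)"
proof -
  have "i \<le> j - 1" using assms by simp
  then show ?thesis
  proof (induction i rule: inc_induct)
    case base
    have "q_serre q (Mq q E j l) (E (j - 1)) = 0"
      using q_serre_Mq_E[of "j - 1"] assms by simp
    then show ?case
      using assms q_pos by (simp add: q_serre_iff_skew_commute_qcomm Mq_step)
  next
    case (step n)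
    have "E n * Mq q E j l = Mq q E j l * E n"
      using assms step.hyps by (intro E_commute_Mq) auto
    then have "skew_commute (1 * q) (qcomm q (E n) (Mq q E (Suc n) l)) (Mq q E j l)"
      using step.IH by (intro skew_commute_qcomm_left) (simp_all add: skew_commute_one_iff)
    then show ?case using assms step.hyps by (simp add: Mq_step)
  qed
qed

end

definition half_cartan :: "nat \<Rightarrow> nat \<Rightarrow> real" where
  "half_cartan a b = (if a = b then 1 else if a = b + 1 \<or> b = a + 1 then -1/2 else 0)"

definition N_weight :: "nat \<Rightarrow> nat \<Rightarrow> nat \<Rightarrow> real" where
  "N_weight l i b = (\<Sum>a\<in>{i..l}. half_cartan a b) - (if b = l then 1 else 0)"

lemma sum_half_cartan:
  assumes "1 \<le> b" and "finite A"
  shows "(\<Sum>a\<in>A. half_cartan a b)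
    = (if b \<in> A then 1 else 0) - (if b - 1 \<in> A then 1/2 else 0) - (if b + 1 \<in> A then 1/2 else 0)"
proof -
  have "half_cartan a b
      = (if a = b then 1 else 0) - (if a = b - 1 then 1/2 else 0) - (if a = b + 1 then 1/2 else 0)" for a
    using assms(1) by (auto simp: half_cartan_def)
  then show ?thesis using assms(2) by (simp add: sum_subtractf sum.delta')
qed

lemma N_weight_eq:
  assumes "1 \<le> i" "i \<le> l" "1 \<le> b" "b \<le> l"
  shows "N_weight l i b = (if b + 1 = i then -1/2 else if b = i \<and> b < l then 1/2
                           else if i < b \<and> b = l then -1/2 else 0)"
  using assms by (auto simp: N_weight_def sum_half_cartan)

lemma sum_N_weight:
  assumes "1 \<le> i" "i \<le> l" "1 \<le> k" "k \<le> l"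
  shows "(\<Sum>b\<in>{k..l}. N_weight l i b) = (if k = i then 0 else -1/2)"
  using assms(4,3)
proof (induction k rule: inc_induct)
  case base
  then show ?case using assms(1,2) by (simp add: N_weight_eq)
next
  case (step n)
  have "(\<Sum>b\<in>{n..l}. N_weight l i b) = N_weight l i n + (\<Sum>b\<in>{Suc n..l}. N_weight l i b)"
    using step.hyps by (simp add: sum.atLeast_Suc_atMost)
  then show ?case using step assms(1,2) by (auto simp: N_weight_eq)
qed

locale enlarged_Uq =
  fixes q :: real and l :: nat and s :: "'a::real_algebra_1 \<Rightarrow> 'a"
    and K Kinv E :: "nat \<Rightarrow> 'a" and Kh Khinv :: 'a
  assumes q_pos: "0 < q" and relations: "Uq_enlarged q l s K Kinv E Kh Khinv"
begin

lemma star: "star_alg s"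
  and K_inverse: "i \<in> {1..l} \<Longrightarrow> Kinv i * K i = 1"
  and K_self_adjoint: "i \<in> {1..l} \<Longrightarrow> s (K i) = K i"
  and K_commute: "i \<in> {1..l} \<Longrightarrow> j \<in> {1..l} \<Longrightarrow> K i * K j = K j * K i"
  and K_E_conj: "i \<in> {1..l} \<Longrightarrow> j \<in> {1..l} \<Longrightarrow> K i * E j * Kinv i =
        (if i = j then q *\<^sub>R E j else if i = j + 1 \<or> j = i + 1 then q powr (-1/2) *\<^sub>R E j else E j)"
  and Kh_inverse: "Kh * Khinv = 1" "Khinv * Kh = 1"
  and Kh_self_adjoint: "s Kh = Kh"
  and Kh_K_commute: "i \<in> {1..l} \<Longrightarrow> Kh * K i = K i * Kh"
  and Kh_E_conj: "j \<in> {1..l} \<Longrightarrow> Kh * E j * Khinv = (if j = l then q *\<^sub>R E j else E j)"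
  using relations by (simp_all add: Uq_enlarged_def)

sublocale quantum_serre q l E
proof
  fix i j
  assume "i \<in> {1..l}" "j \<in> {1..l}"
  with relations show "i = j + 1 \<or> j = i + 1 \<Longrightarrow> q_serre q (E i) (E j) = 0"
    and "i > j + 1 \<or> j > i + 1 \<Longrightarrow> E i * E j = E j * E i"
    unfolding Uq_enlarged_def q_serre_def by blast+
qed (rule q_pos)

lemma skew_commute_K_E:
  assumes "a \<in> {1..l}" and "b \<in> {1..l}"
  shows "skew_commute (q powr half_cartan a b) (K a) (E b)"
  by (rule skew_commute_conj[OF K_inverse[OF assms(1)]])
    (use K_E_conj[OF assms] q_pos in \<open>simp add: half_cartan_def\<close>)

lemma skew_commute_Khinv_E:
  assumes "b \<in> {1..l}"
  shows "skew_commute (q powr - (if b = l then 1 else 0)) Khinv (E b)"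
proof -
  have "skew_commute (if b = l then q else 1) Kh (E b)"
    by (rule skew_commute_conj[OF Kh_inverse(2)]) (simp add: Kh_E_conj[OF assms])
  then have "skew_commute (1 / (if b = l then q else 1)) Khinv (E b)"
    using q_pos by (intro skew_commute_inverse[OF Kh_inverse]) auto
  moreover have "1 / (if b = l then q else 1) = q powr - (if b = l then 1 else 0)"
    using q_pos by (simp add: powr_minus_divide)
  ultimately show ?thesis by simp
qed

lemma Khinv_K_commute: "i \<in> {1..l} \<Longrightarrow> Khinv * K i = K i * Khinv"
  using skew_commute_inverse[OF Kh_inverse, of 1 "K i"] Kh_K_commute
  by (simp add: skew_commute_one_iff)

lemma Khinv_self_adjoint: "s Khinv = Khinv"
  by (rule star_alg_inverse_self_adjoint[OF star Kh_inverse Kh_self_adjoint])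

lemma K_product_self_adjoint:
  "set xs \<subseteq> {1..l} \<Longrightarrow> s (foldr (*) (map K xs) 1) = foldr (*) (map K xs) 1"
proof (induction xs)
  case Nil
  then show ?case by (simp add: star_alg_one[OF star])
next
  case (Cons a xs)
  then have "s (foldr (*) (map K (a # xs)) 1) = foldr (*) (map K xs) 1 * K a"
    by (simp add: star_alg_mult[OF star] K_self_adjoint)
  also have "\<dots> = K a * foldr (*) (map K xs) 1"
    using Cons.prems by (intro commute_foldr K_commute) auto
  finally show ?case by simp
qed

lemma Nq_self_adjoint:
  assumes "1 \<le> i"
  shows "s (Nq K Khinv i l) = Nq K Khinv i l"
proof -
  have "s (foldr (*) (map K [i..<Suc l]) 1) = foldr (*) (map K [i..<Suc l]) 1"
    using assms by (intro K_product_self_adjoint) auto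
  moreover have "foldr (*) (map K [i..<Suc l]) 1 * Khinv = Khinv * foldr (*) (map K [i..<Suc l]) 1"
    using assms by (intro commute_foldr) (auto simp: Khinv_K_commute)
  ultimately show ?thesis by (simp add: Nq_def star_alg_mult[OF star] Khinv_self_adjoint)
qed

lemma Nq_commute:
  assumes "1 \<le> i" and "1 \<le> j"
  shows "Nq K Khinv i l * Nq K Khinv j l = Nq K Khinv j l * Nq K Khinv i l"
proof -
  define F where "F i = foldr (*) (map K [i..<Suc l]) 1" for i
  have F_Khinv: "F i * Khinv = Khinv * F i" if "1 \<le> i" for i
    unfolding F_def using that by (intro commute_foldr) (auto simp: Khinv_K_commute)
  have K_F: "K a * F j = F j * K a" if "a \<in> {1..l}" for a
    unfolding F_def using that assms(2) by (intro commute_foldr[symmetric] K_commute) auto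
  have F_F: "F i * F j = F j * F i"
    unfolding F_def[of i] using assms(1) by (intro commute_foldr K_F) auto
  have "F i * Khinv * (F j * Khinv) = F i * F j * (Khinv * Khinv)"
    using F_Khinv[OF assms(2)] by (metis mult.assoc)
  also have "\<dots> = F j * Khinv * (F i * Khinv)"
    using F_Khinv[OF assms(1)] F_F by (metis mult.assoc)
  finally show ?thesis by (simp add: Nq_def F_def)
qed

lemma skew_commute_Nq_E:
  assumes "1 \<le> i" and "b \<in> {1..l}"
  shows "skew_commute (q powr N_weight l i b) (Nq K Khinv i l) (E b)"
proof -
  let ?F = "foldr (*) (map K [i..<Suc l]) 1"
  have "skew_commute (\<Prod>a\<leftarrow>[i..<Suc l]. q powr half_cartan a b) ?F (E b)"
    using assms by (intro skew_commute_foldr skew_commute_K_E) auto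
  moreover have "(\<Prod>a\<leftarrow>[i..<Suc l]. q powr half_cartan a b) = q powr (\<Sum>a\<in>{i..l}. half_cartan a b)"
    using q_pos prod.distinct_set_conv_list[of "[i..<Suc l]" "\<lambda>a. q powr half_cartan a b"]
    by (simp only: distinct_upt set_upt atLeastLessThanSuc_atLeastAtMost) (simp add: powr_sum)
  ultimately have "skew_commute (q powr (\<Sum>a\<in>{i..l}. half_cartan a b) * q powr - (if b = l then 1 else 0))
      (?F * Khinv) (E b)"
    using skew_commute_mult_left skew_commute_Khinv_E[OF assms(2)] by metis
  moreover have "q powr (\<Sum>a\<in>{i..l}. half_cartan a b) * q powr - (if b = l then 1 else 0)
      = q powr N_weight l i b"
    by (simp add: N_weight_def flip: powr_add)
  ultimately show ?thesis by (simp only: Nq_def)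
qed

lemma skew_commute_Nq_Mq:
  assumes "1 \<le> i" "i \<le> l" "1 \<le> k" "k \<le> l" "k \<noteq> i"
  shows "skew_commute (q powr (-1/2)) (Nq K Khinv i l) (Mq q E k l)"
proof -
  have "skew_commute (\<Prod>b\<in>{k..l}. q powr N_weight l i b) (Nq K Khinv i l) (Mq q E k l)"
    using assms by (intro skew_commute_Mq skew_commute_Nq_E) auto
  moreover have "(\<Prod>b\<in>{k..l}. q powr N_weight l i b) = q powr (-1/2)"
    using assms q_pos by (simp add: sum_N_weight flip: powr_sum)
  ultimately show ?thesis by simp
qed

end

theorem lemma3p14:
  fixes q :: real and l :: nat and s :: "'a::real_algebra_1 \<Rightarrow> 'a"
    and K Kinv E :: "nat \<Rightarrow> 'a" and Kh Khinv :: 'a and i j :: nat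
  assumes "0 < q" "q < 1" "1 \<le> l"
    and "Uq_enlarged q l s K Kinv E Kh Khinv"
    and "1 \<le> i" "i < j" "j \<le> l"
  shows "Xq q l s K E Khinv i * Xq q l s K E Khinv j
           = scaleR (1 / q) (Xq q l s K E Khinv j * Xq q l s K E Khinv i)"
proof -
  interpret enlarged_Uq q l s K Kinv E Kh Khinv
    using assms(1,4) by unfold_locales
  have "skew_commute (1 / q)
      (Nq K Khinv i l * s (Mq q E i l)) (Nq K Khinv j l * s (Mq q E j l))"
  proof (rule skew_commute_mult_star[OF star])
    show "q \<noteq> 0" using assms(1) by simp
    show "s (Nq K Khinv i l) = Nq K Khinv i l" "s (Nq K Khinv j l) = Nq K Khinv j l"
      using assms by (simp_all add: Nq_self_adjoint)
    show "Nq K Khinv i l * Nq K Khinv j l = Nq K Khinv j l * Nq K Khinv i l"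
      using assms by (intro Nq_commute) auto
    show "skew_commute (q powr (-1/2)) (Nq K Khinv i l) (Mq q E j l)"
      and "skew_commute (q powr (-1/2)) (Nq K Khinv j l) (Mq q E i l)"
      using assms by (intro skew_commute_Nq_Mq; simp)+
    show "skew_commute q (Mq q E i l) (Mq q E j l)"
      using assms by (intro Mq_skew_commute)
  qed
  then show ?thesis by (simp add: skew_commute_def Xq_def)
qed

end
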